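(* For $q>-1$ and $x,y>0$ let $H(q,x,y)=\frac{1}{1+q}\int_{-1}^q\frac{(1+s)^2}{s^2}(1-e^{-sx})(1-e^{-sy})\,ds$, and for $X,Y>0$ let $$\tilde H(q,X,Y)=\frac{e^{-(X+Y)/(1+q)}}{(1+q)^2}\,H\Big(q,\frac{X}{1+q},\frac{Y}{1+q}\Big).$$ Then, for every sequence $q_n\to-1$ (with $q_n>-1$), $$\tilde H(q_n,X,Y)\to\frac{1}{(X+Y)^3}\int_0^{X+Y}\xi^2e^{-\xi}\,d\xi$$ locally uniformly in $(X,Y)\in(0,\infty)^2$. *)

theory Defs
  imports "HOL-Analysis.Analysis"
begin

text \<open>H(q,x,y) = 1/(1+q) * integral over [-1,q] of (1+s)^2/s^2 (1-e^(-sx))(1-e^(-sy)) ds.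
  The integrand has a removable singularity at s = 0 (a single point, irrelevant for the integral).\<close>
definition H :: "real \<Rightarrow> real \<Rightarrow> real \<Rightarrow> real" where
  "H q x y = (1 / (1 + q)) *
     integral {-1..q} (\<lambda>s. (1 + s)^2 / s^2 * (1 - exp (- s * x)) * (1 - exp (- s * y)))"

definition Htilde :: "real \<Rightarrow> real \<Rightarrow> real \<Rightarrow> real" where
  "Htilde q X Y = exp (- (X + Y) / (1 + q)) / (1 + q)^2 * H q (X / (1 + q)) (Y / (1 + q))"

definition Hlim :: "real \<Rightarrow> real \<Rightarrow> real" where
  "Hlim X Y = 1 / (X + Y)^3 * integral {0..X + Y} (\<lambda>\<xi>. \<xi>^2 * exp (- \<xi>))"

end

theory Submission
  imports Defs
begin

text \<open>
  Put \<open>e = 1 + q\<close>. The substitution \<open>s = e t - 1\<close> turns \<open>Htilde q X Y\<close> into the integral over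
  \<open>[0, 1]\<close> of \<open>t^2 / (1 - e t)^2 * (exp (-t X) - exp (-X/e)) * (exp (-t Y) - exp (-Y/e))\<close>, and the
  substitution \<open>\<xi> = (X + Y) t\<close> turns \<open>Hlim X Y\<close> into the integral over \<open>[0, 1]\<close> of
  \<open>t^2 * exp (-t (X + Y))\<close>. The weight satisfies \<open>1/(1 - e t)^2 = 1 + O(e)\<close>, and
  \<open>exp (-X/e) \<le> e/X\<close>, \<open>exp (-Y/e) \<le> e/Y\<close>; on a compact subset of the open quadrant both
  coordinates are at least some \<open>m > 0\<close>, so the integrands differ by at most \<open>e (8 + 2/m)\<close>
  uniformly there.
\<close>

lemma integral_affine_rescale:
  fixes f :: "real \<Rightarrow> real"
  assumes "f integrable_on {a..b}" "a \<le> b" "m > 0"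
  shows "integral {(a - c) / m..(b - c) / m} (\<lambda>t. f (m * t + c)) = integral {a..b} f / m"
proof -
  have "(f has_integral integral {a..b} f) (cbox a b)"
    using assms(1) by (simp add: integrable_integral)
  from has_integral_affinity[OF this, of m c] assms(3)
  have "((\<lambda>t. f (m * t + c)) has_integral integral {a..b} f / m)
          ((\<lambda>x. (1 / m) * x + - ((1 / m) * c)) ` {a..b})"
    by simp
  moreover have "(\<lambda>x. (1 / m) * x + - ((1 / m) * c)) ` {a..b} = {(a - c) / m..(b - c) / m}"
    using assms(2,3) by (subst image_affinity_atLeastAtMost) (auto simp: field_simps)
  ultimately show ?thesis by (simp add: integral_unique)
qed

lemma uniform_limit_of_vanishing_bound:
  assumes "\<forall>\<^sub>F n in F. \<forall>x\<in>S. dist (f n x) (g x) \<le> b n"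
    and "(b \<longlongrightarrow> 0) F"
  shows "uniform_limit S f g F"
  unfolding uniform_limit_iff
proof (intro allI impI)
  fix d :: real assume "d > 0"
  with assms(2) have "\<forall>\<^sub>F n in F. b n < d" by (simp add: order_tendstoD(2))
  with assms(1) show "\<forall>\<^sub>F n in F. \<forall>x\<in>S. dist (f n x) (g x) < d"
    by eventually_elim fastforce
qed

lemma compact_in_open_quadrant_bounded_away:
  assumes "compact K" "K \<subseteq> {p :: real \<times> real. fst p > 0 \<and> snd p > 0}"
  obtains m where "m > 0" "\<And>p. p \<in> K \<Longrightarrow> m \<le> fst p \<and> m \<le> snd p"
proof (cases "K = {}")
  case True
  then show ?thesis using that[of 1] by auto
next
  case False
  have "continuous_on K (\<lambda>p. min (fst p) (snd p))" by (intro continuous_intros)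
  from continuous_attains_inf[OF assms(1) False this] obtain p0 where
    "p0 \<in> K" and p0_min: "\<And>p. p \<in> K \<Longrightarrow> min (fst p0) (snd p0) \<le> min (fst p) (snd p)"
    by auto
  with assms(2) have "min (fst p0) (snd p0) > 0" by auto
  with p0_min show ?thesis using that[of "min (fst p0) (snd p0)"] by force
qed

lemma exp_neg_le_inverse:
  fixes x :: real
  assumes "x > 0"
  shows "exp (- x) \<le> 1 / x"
proof -
  have "x \<le> exp x" using exp_ge_add_one_self[of x] by linarith
  with assms show ?thesis by (simp add: exp_minus field_simps)
qed

lemma perturbed_product_bound:
  fixes a b da db :: real
  assumes "0 \<le> da" "da \<le> a" "a \<le> 1" "0 \<le> db" "db \<le> b" "b \<le> 1"
  shows "\<bar>(a - da) * (b - db) - a * b\<bar> \<le> da + db"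
proof -
  have "(a - da) * (b - db) - a * b = da * db - a * db - da * b" by (simp add: algebra_simps)
  moreover have "da * db \<le> a * db" "a * db \<le> db" "da * b \<le> da" "0 \<le> da * b" "0 \<le> da * db"
    using assms by (auto intro: mult_right_mono mult_left_le mult_left_le_one_le)
  ultimately show ?thesis unfolding abs_le_iff by linarith
qed

lemma inverse_square_one_minus_bound:
  fixes s :: real
  assumes "0 \<le> s" "s \<le> 1/2"
  shows "0 \<le> 1 / (1 - s)^2 - 1" "1 / (1 - s)^2 - 1 \<le> 8 * s"
proof -
  have "(1/2)^2 \<le> (1 - s)^2" using assms by (intro power_mono) auto
  moreover have "(1 - s)^2 \<le> 1" using assms by (intro power_le_one) auto
  ultimately have w: "1/4 \<le> (1 - s)^2" "(1 - s)^2 \<le> 1" by (simp_all add: power2_eq_square)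
  with assms show "0 \<le> 1 / (1 - s)^2 - 1" by (simp add: le_divide_eq_1)
  have "1 / (1 - s)^2 - 1 = (s * (2 - s)) * (1 / (1 - s)^2)"
    using w by (simp add: field_simps power2_eq_square)
  also have "\<dots> \<le> (s * 2) * 4"
    using assms w by (intro mult_mono) (auto simp: field_simps)
  finally show "1 / (1 - s)^2 - 1 \<le> 8 * s" by simp
qed

text \<open>The integrand of \<open>Htilde (e - 1) X Y\<close> after substituting \<open>s = e t - 1\<close>, with the prefactor
  \<open>exp (-(X + Y)/e)\<close> absorbed into the factors \<open>1 - exp (-s X/e)\<close> and \<open>1 - exp (-s Y/e)\<close>.\<close>
definition rescaled_integrand :: "real \<Rightarrow> real \<Rightarrow> real \<Rightarrow> real \<Rightarrow> real" where
  "rescaled_integrand e X Y t =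
     t^2 / (1 - e * t)^2 * ((exp (- t * X) - exp (- X / e)) * (exp (- t * Y) - exp (- Y / e)))"

definition limit_integrand :: "real \<Rightarrow> real \<Rightarrow> real \<Rightarrow> real" where
  "limit_integrand X Y t = t^2 * exp (- t * (X + Y))"

lemma continuous_on_rescaled_integrand:
  assumes "0 < e" "e < 1"
  shows "continuous_on {0..1} (rescaled_integrand e X Y)"
proof -
  have "(1 - e * t)^2 \<noteq> 0" if "t \<in> {0..1}" for t
  proof -
    have "e * t \<le> e" using that assms by (simp add: mult_left_le)
    with assms have "e * t < 1" by linarith
    then show ?thesis by simp
  qed
  then show ?thesis unfolding rescaled_integrand_def by (intro continuous_intros) auto
qed

lemma rescaled_integrand_approx:
  assumes "0 \<le> t" "t \<le> 1" "0 < e" "e \<le> 1/2" "m > 0" "m \<le> X" "m \<le> Y"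
  shows "\<bar>rescaled_integrand e X Y t - limit_integrand X Y t\<bar> \<le> e * (8 + 2 / m)"
proof -
  define a where "a = exp (- t * X)"
  define b where "b = exp (- t * Y)"
  define da where "da = exp (- X / e)"
  define db where "db = exp (- Y / e)"
  define P where "P = (a - da) * (b - db)"
  define w where "w = 1 / (1 - e * t)^2"
  have "1 \<le> 1 / e" using assms by (simp add: field_simps)
  then have "t \<le> 1 / e" using assms by linarith
  then have "t * X \<le> X / e" "t * Y \<le> Y / e"
    using assms mult_right_mono[of t "1/e"] by auto
  then have ab: "0 \<le> da" "da \<le> a" "a \<le> 1" "0 \<le> db" "db \<le> b" "b \<le> 1"
    using assms unfolding a_def b_def da_def db_def by auto
  have "exp (- (X / e)) \<le> 1 / (X / e)" "exp (- (Y / e)) \<le> 1 / (Y / e)"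
    using assms by (intro exp_neg_le_inverse; simp)+
  then have "da \<le> e / X" "db \<le> e / Y" unfolding da_def db_def by simp_all
  moreover have "e / X \<le> e / m" "e / Y \<le> e / m"
    using assms by (intro frac_le; simp)+
  ultimately have product_error: "\<bar>P - a * b\<bar> \<le> 2 * e / m"
    using perturbed_product_bound[OF ab] unfolding P_def by linarith
  have et: "0 \<le> e * t" "e * t \<le> e" using assms by (simp_all add: mult_left_le)
  with assms have "0 \<le> w - 1" "w - 1 \<le> 8 * (e * t)"
    unfolding w_def by (intro inverse_square_one_minus_bound; linarith)+
  with et have "0 \<le> w - 1" "w - 1 \<le> 8 * e" by linarith+
  moreover have "0 \<le> P" "P \<le> 1" using ab unfolding P_def by (auto intro: mult_le_one)
  ultimately have "\<bar>(w - 1) * P\<bar> \<le> 8 * e"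
    using mult_left_mono[of P 1 "w - 1"] by (simp add: abs_mult)
  with product_error have "\<bar>(w - 1) * P + (P - a * b)\<bar> \<le> e * (8 + 2 / m)"
    by (simp add: algebra_simps)
  moreover have "rescaled_integrand e X Y t - limit_integrand X Y t
      = t^2 * ((w - 1) * P + (P - a * b))"
  proof -
    have "exp (- t * (X + Y)) = a * b"
      unfolding a_def b_def by (simp add: algebra_simps flip: exp_add)
    moreover have "rescaled_integrand e X Y t = t^2 * w * P"
      unfolding rescaled_integrand_def w_def P_def a_def b_def da_def db_def by simp
    ultimately show ?thesis unfolding limit_integrand_def by (simp add: algebra_simps)
  qed
  moreover have "t^2 \<le> 1" using assms by (simp add: power_le_one)
  ultimately show ?thesis
    using mult_left_le_one_le[of "\<bar>(w - 1) * P + (P - a * b)\<bar>" "t^2"] by (simp add: abs_mult)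
qed

lemma Htilde_eq_integral_rescaled:
  assumes "-1 < q" "q < 0"
  shows "Htilde q X Y = integral {0..1} (rescaled_integrand (1 + q) X Y)"
proof -
  define e where "e = 1 + q"
  have e: "0 < e" "e < 1" using assms unfolding e_def by auto
  define f where "f = (\<lambda>s. (1 + s)^2 / s^2 * (1 - exp (- s * (X / e))) * (1 - exp (- s * (Y / e))))"
  have "continuous_on {-1..q} f" unfolding f_def using assms by (intro continuous_intros) auto
  then have "f integrable_on {-1..q}" by (rule integrable_continuous_real)
  from integral_affine_rescale[OF this, of e "-1"] assms e
  have substitution: "integral {0..1} (\<lambda>t. f (e * t - 1)) = integral {-1..q} f / e"
    by (simp add: e_def add.commute)
  have factor: "exp (- Z / e) * (1 - exp (- (e * t - 1) * (Z / e))) = - (exp (- t * Z) - exp (- Z / e))"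
    for Z t :: real
  proof -
    have "- Z / e + - (e * t - 1) * (Z / e) = - t * Z" using e by (simp add: field_simps)
    then show ?thesis by (simp add: algebra_simps flip: exp_add)
  qed
  have integrand: "exp (- (X + Y) / e) / e^2 * f (e * t - 1) = rescaled_integrand e X Y t" for t
  proof -
    have "- (X + Y) / e = - X / e + - Y / e" by (simp add: diff_divide_distrib)
    then have exp_split: "exp (- (X + Y) / e) = exp (- X / e) * exp (- Y / e)" by (simp only: exp_add)
    have "exp (- (X + Y) / e) / e^2 * f (e * t - 1)
        = (1 + (e * t - 1))^2 / e^2 / (e * t - 1)^2
          * ((exp (- X / e) * (1 - exp (- (e * t - 1) * (X / e))))
          * (exp (- Y / e) * (1 - exp (- (e * t - 1) * (Y / e)))))"
      unfolding f_def exp_split by (simp add: divide_inverse mult_ac)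
    also have "(1 + (e * t - 1))^2 / e^2 / (e * t - 1)^2 = t^2 / (1 - e * t)^2"
      using e by (simp add: power2_eq_square algebra_simps)
    also have "(exp (- X / e) * (1 - exp (- (e * t - 1) * (X / e))))
          * (exp (- Y / e) * (1 - exp (- (e * t - 1) * (Y / e))))
        = (exp (- t * X) - exp (- X / e)) * (exp (- t * Y) - exp (- Y / e))"
      by (simp only: factor minus_mult_minus)
    finally show ?thesis unfolding rescaled_integrand_def .
  qed
  have "Htilde q X Y = exp (- (X + Y) / e) / e^2 * integral {0..1} (\<lambda>t. f (e * t - 1))"
    unfolding Htilde_def H_def substitution by (simp add: e_def f_def)
  also have "\<dots> = integral {0..1} (\<lambda>t. exp (- (X + Y) / e) / e^2 * f (e * t - 1))"
    by simp
  also have "\<dots> = integral {0..1} (rescaled_integrand e X Y)"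
    unfolding integrand ..
  finally show ?thesis unfolding e_def .
qed

lemma Hlim_eq_integral_limit:
  assumes "X + Y > 0"
  shows "Hlim X Y = integral {0..1} (limit_integrand X Y)"
proof -
  define Z where "Z = X + Y"
  define g where "g = (\<lambda>\<xi>::real. \<xi>^2 * exp (- \<xi>))"
  have "g integrable_on {0..Z}" unfolding g_def by (intro integrable_continuous_real continuous_intros)
  from integral_affine_rescale[OF this, of Z 0] assms
  have substitution: "integral {0..1} (\<lambda>t. g (Z * t)) = integral {0..Z} g / Z"
    by (simp add: Z_def)
  have "integral {0..1} (limit_integrand X Y) = integral {0..1} (\<lambda>t. g (Z * t) / Z^2)"
    using assms by (intro integral_cong)
      (simp add: limit_integrand_def g_def Z_def power_mult_distrib mult.commute)
  also have "\<dots> = integral {0..Z} g / Z^3"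
    using substitution assms by (simp add: Z_def power3_eq_cube power2_eq_square)
  finally show ?thesis unfolding Hlim_def g_def Z_def by (simp add: divide_inverse mult.commute)
qed

lemma dist_Htilde_Hlim_le:
  assumes "-1 < q" "q \<le> -1/2" "m > 0" "m \<le> X" "m \<le> Y"
  shows "dist (Htilde q X Y) (Hlim X Y) \<le> (1 + q) * (8 + 2 / m)"
proof -
  define e where "e = 1 + q"
  have e: "0 < e" "e \<le> 1/2" using assms unfolding e_def by auto
  have rescaled_integrable: "rescaled_integrand e X Y integrable_on {0..1}"
    using continuous_on_rescaled_integrand[of e X Y] e by (simp add: integrable_continuous_real)
  moreover have limit_integrable: "limit_integrand X Y integrable_on {0..1}"
    unfolding limit_integrand_def by (intro integrable_continuous_real continuous_intros)
  ultimately have "Htilde q X Y - Hlim X Y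
      = integral (cbox 0 1) (\<lambda>t. rescaled_integrand e X Y t - limit_integrand X Y t)"
    using assms Htilde_eq_integral_rescaled[of q X Y] Hlim_eq_integral_limit[of X Y]
    by (simp add: integral_diff e_def)
  also have "norm \<dots> \<le> e * (8 + 2 / m) * measure lborel (cbox 0 (1::real))"
    using e assms rescaled_integrand_approx[of _ e m X Y] rescaled_integrable limit_integrable
    by (intro integrable_bound integrable_diff) auto
  finally show ?thesis unfolding dist_real_def e_def by simp
qed

theorem lemma3p10:
  fixes q :: "nat \<Rightarrow> real"
  assumes "\<And>n. q n > -1"
    and "q \<longlonglongrightarrow> -1"
  shows "\<And>K. compact K \<Longrightarrow> K \<subseteq> {p :: real \<times> real. fst p > 0 \<and> snd p > 0} \<Longrightarrow>
           uniform_limit K (\<lambda>n p. Htilde (q n) (fst p) (snd p)) (\<lambda>p. Hlim (fst p) (snd p)) sequentially"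
proof -
  fix K :: "(real \<times> real) set"
  assume K: "compact K" "K \<subseteq> {p :: real \<times> real. fst p > 0 \<and> snd p > 0}"
  obtain m where m: "m > 0" "\<And>p. p \<in> K \<Longrightarrow> m \<le> fst p \<and> m \<le> snd p"
    using compact_in_open_quadrant_bounded_away[OF K] by blast
  have "\<forall>\<^sub>F n in sequentially. q n < -1/2"
    using assms(2) by (simp add: order_tendstoD(2))
  then have "\<forall>\<^sub>F n in sequentially. \<forall>p\<in>K.
      dist (Htilde (q n) (fst p) (snd p)) (Hlim (fst p) (snd p)) \<le> (1 + q n) * (8 + 2 / m)"
    by eventually_elim (use assms(1) m in \<open>auto intro: dist_Htilde_Hlim_le\<close>)
  moreover have "((\<lambda>n. (1 + q n) * (8 + 2 / m)) \<longlongrightarrow> 0) sequentially"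
    using assms(2) by (auto intro!: tendsto_eq_intros)
  ultimately show "uniform_limit K (\<lambda>n p. Htilde (q n) (fst p) (snd p)) (\<lambda>p. Hlim (fst p) (snd p)) sequentially"
    by (rule uniform_limit_of_vanishing_bound)
qed

end
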